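(* Let $\alpha\neq0$ and $u_0>0$ be real numbers. The initial value problem $$\left(r\frac{u'}{\sqrt{1-u'^2}}\right)'=r\frac{\alpha}{u\sqrt{1-u'^2}}\quad\text{for } r\in(0,\delta),\qquad u(0)=u_0,\quad u'(0)=0,$$ has a solution $u\in C^2([0,\delta])$ for some $\delta>0$, and this solution depends continuously on the initial data. *)

theory Defs
  imports "HOL-Analysis.Analysis"
begin

definition C2_on :: "real \<Rightarrow> (real \<Rightarrow> real) \<Rightarrow> (real \<Rightarrow> real) \<Rightarrow> (real \<Rightarrow> real) \<Rightarrow> bool" where
  "C2_on d u u1 u2 \<longleftrightarrow>
     (\<forall>r\<in>{0..d}. (u has_real_derivative u1 r) (at r within {0..d}) \<and>
                  (u1 has_real_derivative u2 r) (at r within {0..d})) \<and>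
     continuous_on {0..d} u2"

text \<open>u \<in> C^2([0,d]) solves the initial value problem
  (r u'/sqrt(1-u'^2))' = r alpha / (u sqrt(1-u'^2)) on (0,d), u(0)=u0, u'(0)=0.
  The equation only makes sense where u > 0 and |u'| < 1, which is required on [0,d].\<close>
definition is_solution :: "real \<Rightarrow> real \<Rightarrow> real \<Rightarrow> (real \<Rightarrow> real) \<Rightarrow> bool" where
  "is_solution \<alpha> u0 d u \<longleftrightarrow>
     (\<exists>u1 u2. C2_on d u u1 u2 \<and>
        (\<forall>r\<in>{0..d}. u r > 0 \<and> \<bar>u1 r\<bar> < 1) \<and>
        (\<forall>r\<in>{0<..<d}.
            ((\<lambda>s. s * u1 s / sqrt (1 - (u1 s)\<^sup>2)) has_real_derivative
               (r * \<alpha> / (u r * sqrt (1 - (u1 r)\<^sup>2)))) (at r)) \<and>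
        u 0 = u0 \<and> u1 0 = 0)"

end

theory Submission
  imports Defs
begin

text \<open>In terms of the momentum p = u'/sqrt(1 - u'^2) the equation reads (r p)' = r f with
  f = \<alpha> sqrt(1 + p^2)/u, and u' = p/sqrt(1 + p^2). Given f, the momentum with p(0) = 0 is
  p(r) = r \<integral> t f(r t) dt over t \<in> [0, 1], and integrating u' recovers u with u(0) = u0. So a
  solution is the same as a fixed point f of an integral operator; after truncating the
  nonlinearity so that the operator is globally bounded and Lipschitz, it is a contraction on
  bounded continuous functions for small \<delta>, and on [0, \<delta>] the truncations are inactive.

  Continuous dependence comes from the scaling symmetry of the equation: if u solves the
  problem with u(0) = a, then r \<mapsto> u(k r)/k solves it with u(0) = a/k. Since solutions are
  1-Lipschitz, these rescalings depend Lipschitz-continuously on the initial value.\<close>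

section \<open>Velocity and the truncated source\<close>

text \<open>The inverse of v \<mapsto> v / sqrt (1 - v^2), taking a momentum to the slope u'.\<close>

definition velocity :: "real \<Rightarrow> real" where
  "velocity p = p / sqrt (1 + p\<^sup>2)"

lemma sqrt_one_plus_sq_gt_abs: "\<bar>p\<bar> < sqrt (1 + p\<^sup>2)"
  by (metis add.commute less_add_one real_sqrt_abs real_sqrt_less_iff)

lemma sqrt_one_plus_sq_pos: "sqrt (1 + p\<^sup>2) > 0"
  using sqrt_one_plus_sq_gt_abs[of p] by linarith

lemma sqrt_one_plus_sq_lipschitz: "\<bar>sqrt (1 + p\<^sup>2) - sqrt (1 + q\<^sup>2)\<bar> \<le> \<bar>p - q\<bar>"
proof -
  \<comment> \<open>the reverse triangle inequality for the Euclidean norm of (1, p)\<close>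
  have "\<bar>cmod (Complex 1 p) - cmod (Complex 1 q)\<bar> \<le> cmod (Complex 1 p - Complex 1 q)"
    by (rule norm_triangle_ineq3)
  then show ?thesis
    by (simp add: cmod_def)
qed

lemma sqrt_one_plus_sq_has_real_derivative:
  "((\<lambda>p. sqrt (1 + p\<^sup>2)) has_real_derivative p / sqrt (1 + p\<^sup>2)) (at p)"
  using sqrt_one_plus_sq_pos[of p]
  by (auto intro!: derivative_eq_intros simp: field_simps power2_eq_square)

definition velocity_deriv :: "real \<Rightarrow> real" where
  "velocity_deriv p = 1 / ((1 + p\<^sup>2) * sqrt (1 + p\<^sup>2))"

lemma velocity_has_real_derivative: "(velocity has_real_derivative velocity_deriv p) (at p)"
proof -
  define s where "s = sqrt (1 + p\<^sup>2)"
  have s: "s > 0" "s * s = 1 + p\<^sup>2"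
    using sqrt_one_plus_sq_pos[of p] by (simp_all add: s_def)
  have "(velocity has_real_derivative (1 * s - p * (p / s)) / (s * s)) (at p)"
    unfolding velocity_def s_def
    by (rule DERIV_divide[OF DERIV_ident sqrt_one_plus_sq_has_real_derivative])
      (use sqrt_one_plus_sq_pos[of p] in simp)
  moreover have "(1 * s - p * (p / s)) / (s * s) = 1 / ((1 + p\<^sup>2) * s)"
    using s by (simp add: field_simps power2_eq_square)
  ultimately show ?thesis
    by (simp add: s_def velocity_deriv_def)
qed

lemma continuous_on_velocity: "continuous_on S velocity"
  using velocity_has_real_derivative
  by (intro continuous_at_imp_continuous_on) (auto intro: DERIV_isCont)

lemma abs_velocity_less_one: "\<bar>velocity p\<bar> < 1"
  using sqrt_one_plus_sq_gt_abs[of p] sqrt_one_plus_sq_pos[of p]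
  by (simp add: velocity_def abs_div)

lemma abs_velocity_deriv_le_one: "\<bar>velocity_deriv p\<bar> \<le> 1"
proof -
  have "1 \<le> (1 + p\<^sup>2) * sqrt (1 + p\<^sup>2)"
    by (rule order_trans[OF _ mult_mono[of 1 _ 1]]) auto
  then show ?thesis
    by (simp add: velocity_deriv_def)
qed

lemma velocity_lipschitz: "\<bar>velocity p - velocity q\<bar> \<le> \<bar>p - q\<bar>"
  using field_differentiable_bound[of UNIV velocity velocity_deriv 1 p q]
    velocity_has_real_derivative abs_velocity_deriv_le_one
  by auto

lemma sqrt_one_minus_velocity_sq: "sqrt (1 - (velocity p)\<^sup>2) = 1 / sqrt (1 + p\<^sup>2)"
proof -
  have "1 - (velocity p)\<^sup>2 = 1 / (1 + p\<^sup>2)"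
    using sqrt_one_plus_sq_pos[of p] by (simp add: velocity_def field_simps)
  then show ?thesis
    by (simp add: real_sqrt_divide)
qed

lemma velocity_div_sqrt_one_minus_sq: "velocity p / sqrt (1 - (velocity p)\<^sup>2) = p"
  unfolding sqrt_one_minus_velocity_sq using sqrt_one_plus_sq_pos[of p] by (simp add: velocity_def)

lemma continuous_on_velocity_deriv: "continuous_on S velocity_deriv"
  unfolding velocity_deriv_def using sqrt_one_plus_sq_pos
  by (intro continuous_intros) (auto simp: add_nonneg_eq_0_iff)

text \<open>The right-hand side \<alpha> sqrt(1 + p^2)/u, truncated so that it is bounded and globally
  Lipschitz.\<close>

definition source :: "real \<Rightarrow> real \<Rightarrow> real \<Rightarrow> real \<Rightarrow> real" where
  "source \<alpha> c p v = \<alpha> * sqrt (1 + (clamp (-1) 1 p)\<^sup>2) / max v c"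

lemma sqrt_one_plus_clamp_sq_le: "sqrt (1 + (clamp (-1) 1 p)\<^sup>2) \<le> 2"
proof -
  have "\<bar>clamp (-1) 1 p\<bar> \<le> 1"
    using clamp_in_interval[of "-1" 1 p] by auto
  then have "(clamp (-1) 1 p)\<^sup>2 \<le> 1"
    by (simp add: abs_square_le_1)
  then show ?thesis
    using real_sqrt_le_mono[of "1 + (clamp (-1) 1 p)\<^sup>2" 4] by simp
qed

lemma abs_source_le:
  assumes "c > 0"
  shows "\<bar>source \<alpha> c p v\<bar> \<le> 2 * \<bar>\<alpha>\<bar> / c"
proof -
  have "\<bar>source \<alpha> c p v\<bar> = \<bar>\<alpha>\<bar> * sqrt (1 + (clamp (-1) 1 p)\<^sup>2) / max v c"
    using assms by (simp add: source_def abs_mult abs_div)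
  also have "\<dots> \<le> \<bar>\<alpha>\<bar> * 2 / c"
    using assms sqrt_one_plus_clamp_sq_le[of p]
    by (intro frac_le mult_left_mono) auto
  finally show ?thesis
    by (simp only: mult.commute)
qed

lemma source_eq:
  assumes "\<bar>p\<bar> \<le> 1" and "c \<le> v"
  shows "source \<alpha> c p v = \<alpha> * sqrt (1 + p\<^sup>2) / v"
  using assms clamp_cancel_cbox[of p "-1" 1] by (simp add: source_def abs_le_iff)

lemma source_lipschitz:
  assumes c: "c > 0"
  shows "\<bar>source \<alpha> c p v - source \<alpha> c q w\<bar>
    \<le> \<bar>\<alpha>\<bar> * (1/c + 2/c\<^sup>2) * (\<bar>p - q\<bar> + \<bar>v - w\<bar>)"
proof -
  define A B m n where "A = sqrt (1 + (clamp (-1) 1 p)\<^sup>2)" and "B = sqrt (1 + (clamp (-1) 1 q)\<^sup>2)"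
    and "m = max v c" and "n = max w c"
  have mn: "m \<ge> c" "n \<ge> c"
    by (simp_all add: m_def n_def)
  have src: "source \<alpha> c p v = \<alpha> * A / m" "source \<alpha> c q w = \<alpha> * B / n"
    by (simp_all add: source_def A_def B_def m_def n_def)
  have AB: "\<bar>A - B\<bar> \<le> \<bar>p - q\<bar>"
    using sqrt_one_plus_sq_lipschitz[of "clamp (-1) 1 p" "clamp (-1) 1 q"]
      dist_clamps_le_dist_args[of "-1" 1 p q]
    by (simp add: A_def B_def dist_real_def)
  have B: "0 \<le> B" "B \<le> 2"
    using sqrt_one_plus_clamp_sq_le[of q] by (simp_all add: B_def)
  have AB_m: "\<bar>(A - B) / m\<bar> \<le> \<bar>p - q\<bar> / c"
    using AB mn c by (simp add: abs_div frac_le)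
  have mn_inv: "\<bar>1/m - 1/n\<bar> \<le> \<bar>v - w\<bar> / c\<^sup>2"
  proof -
    have "\<bar>1/m - 1/n\<bar> = \<bar>m - n\<bar> / (m * n)"
      using mn c by (simp add: field_simps abs_div abs_minus_commute)
    also have "\<dots> \<le> \<bar>v - w\<bar> / c\<^sup>2"
      using mn c unfolding power2_eq_square
      by (intro frac_le mult_mono) (auto simp: m_def n_def max_def)
    finally show ?thesis .
  qed
  have "source \<alpha> c p v - source \<alpha> c q w = \<alpha> * ((A - B) / m + B * (1/m - 1/n))"
    using src mn c by (simp add: field_simps)
  then have "\<bar>source \<alpha> c p v - source \<alpha> c q w\<bar> = \<bar>\<alpha>\<bar> * \<bar>(A - B) / m + B * (1/m - 1/n)\<bar>"
    by (simp add: abs_mult)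
  also have "\<dots> \<le> \<bar>\<alpha>\<bar> * (\<bar>(A - B) / m\<bar> + B * \<bar>1/m - 1/n\<bar>)"
    using B by (intro mult_left_mono order_trans[OF abs_triangle_ineq]) (auto simp: abs_mult)
  also have "\<dots> \<le> \<bar>\<alpha>\<bar> * (\<bar>p - q\<bar> / c + 2 * (\<bar>v - w\<bar> / c\<^sup>2))"
    using AB_m mult_mono[OF B(2) mn_inv] by (intro mult_left_mono add_mono) auto
  also have "\<dots> \<le> \<bar>\<alpha>\<bar> * (1/c + 2/c\<^sup>2) * (\<bar>p - q\<bar> + \<bar>v - w\<bar>)"
    using c by (simp add: field_simps mult_left_mono)
  finally show ?thesis .
qed

lemma continuous_on_source:
  assumes "continuous_on S p" and "continuous_on S v" and "c > 0"
  shows "continuous_on S (\<lambda>r. source \<alpha> c (p r) (v r))"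
proof -
  have "continuous_on UNIV (clamp (-1) (1::real))"
    using clamp_continuous_on[of "-1" 1 "\<lambda>x. x" UNIV] by simp
  then have "continuous_on S (\<lambda>r. clamp (-1) 1 (p r))"
    by (rule continuous_on_compose2[OF _ assms(1) subset_UNIV])
  then show ?thesis
    unfolding source_def using assms(2,3)
    by (intro continuous_intros) (auto simp: max_def)
qed

section \<open>Radial averages\<close>

text \<open>For r > 0, momentum f r = (1/r) \<integral> s f(s) ds over s \<in> [0, r] solves (r p)' = r f;
  writing it as a mean over [0, 1] makes its continuity and differentiability at r = 0 evident.\<close>

definition radial_mean :: "(real \<Rightarrow> real) \<Rightarrow> real \<Rightarrow> real" where
  "radial_mean f r = integral {0..1} (\<lambda>t. t * f (r * t))"

definition momentum :: "(real \<Rightarrow> real) \<Rightarrow> real \<Rightarrow> real" where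
  "momentum f r = r * radial_mean f r"

lemma continuous_on_radial_mean_integrand:
  fixes f :: "real \<Rightarrow> real"
  assumes "continuous_on UNIV f"
  shows "continuous_on S (\<lambda>t. t * f (r * t))"
proof -
  have "continuous_on S (\<lambda>t. f (r * t))"
    by (rule continuous_on_compose2[OF assms _ subset_UNIV])
      (use continuous_on_mult_left[OF continuous_on_id, of S r] in \<open>simp add: id_def\<close>)
  then show ?thesis
    by (intro continuous_intros)
qed

lemma continuous_on_radial_mean:
  fixes f :: "real \<Rightarrow> real"
  assumes "continuous_on UNIV f"
  shows "continuous_on S (radial_mean f)"
proof -
  have "continuous_on (UNIV \<times> cbox 0 1) (\<lambda>(r, t). t * f (r * t))"
    unfolding split_beta
    by (intro continuous_intros continuous_on_compose2[OF assms]) auto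
  from integral_continuous_on_param[OF this] have "continuous_on UNIV (radial_mean f)"
    by (simp add: radial_mean_def)
  then show ?thesis
    by (rule continuous_on_subset) simp
qed

lemma continuous_on_momentum:
  fixes f :: "real \<Rightarrow> real"
  assumes "continuous_on UNIV f"
  shows "continuous_on S (momentum f)"
  unfolding momentum_def by (intro continuous_intros continuous_on_radial_mean assms)

lemma abs_radial_mean_le:
  fixes f :: "real \<Rightarrow> real"
  assumes "continuous_on UNIV f" and "\<And>x. \<bar>f x\<bar> \<le> M"
  shows "\<bar>radial_mean f r\<bar> \<le> M"
proof -
  have "norm (integral {0..1} (\<lambda>t. t * f (r * t))) \<le> M * (1 - 0)"
  proof (rule integral_bound)
    fix t :: real
    assume "t \<in> {0..1}"
    then show "norm (t * f (r * t)) \<le> M"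
      using mult_mono[of "\<bar>t\<bar>" 1 "\<bar>f (r * t)\<bar>" M] assms(2)[of "r * t"] by (simp add: abs_mult)
  qed (auto intro: continuous_on_radial_mean_integrand assms(1))
  then show ?thesis
    by (simp add: radial_mean_def)
qed

lemma abs_momentum_le:
  fixes f :: "real \<Rightarrow> real"
  assumes "continuous_on UNIV f" and "\<And>x. \<bar>f x\<bar> \<le> M"
  shows "\<bar>momentum f r\<bar> \<le> \<bar>r\<bar> * M"
  unfolding momentum_def abs_mult by (rule mult_left_mono[OF abs_radial_mean_le[OF assms]]) simp

lemma radial_mean_diff:
  fixes f g :: "real \<Rightarrow> real"
  assumes "continuous_on UNIV f" and "continuous_on UNIV g"
  shows "radial_mean f r - radial_mean g r = radial_mean (\<lambda>x. f x - g x) r"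
  unfolding radial_mean_def right_diff_distrib
  by (rule integral_diff[symmetric])
    (auto intro: integrable_continuous_interval continuous_on_radial_mean_integrand assms)

lemma radial_mean_0: "radial_mean f 0 = f 0 / 2"
proof -
  have "((\<lambda>t::real. t) has_integral (1\<^sup>2/2 - 0\<^sup>2/2)) {0..1}"
    by (rule fundamental_theorem_of_calculus)
      (auto intro!: derivative_eq_intros simp: has_real_derivative_iff_has_vector_derivative[symmetric])
  then show ?thesis
    by (simp add: radial_mean_def integral_unique)
qed

lemma integral_weighted_eq_radial_mean:
  assumes "r > 0"
  shows "integral {0..r} (\<lambda>s. s * f s) = r\<^sup>2 * radial_mean f r"
proof -
  have "integral {0..1} (\<lambda>t. (r * t) * f (r * t)) = (1 / r) * integral {0..r} (\<lambda>s. s * f s)"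
    using integral_stretch_real[where m = r and a = 0 and b = r and f = "\<lambda>s. s * f s"] assms by simp
  moreover have "integral {0..1} (\<lambda>t. (r * t) * f (r * t)) = r * radial_mean f r"
    using integral_cmul[where c = r and f = "\<lambda>t. t * f (r * t)" and S = "{0..1}"]
    by (simp add: radial_mean_def mult.assoc)
  ultimately show ?thesis
    using assms by (simp add: field_simps power2_eq_square)
qed

lemma weighted_momentum_has_real_derivative:
  fixes f :: "real \<Rightarrow> real"
  assumes f: "continuous_on UNIV f" and r: "r > 0"
  shows "((\<lambda>s. s * momentum f s) has_real_derivative r * f r) (at r)"
proof -
  have "((\<lambda>x. integral {0..x} (\<lambda>s. s * f s)) has_real_derivative r * f r) (at r within {0..r+1})"
    using r by (intro integral_has_real_derivative continuous_intros continuous_on_subset[OF f]) auto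
  moreover have "at r within {0..r+1} = at r"
    using r by (intro at_within_interior) simp
  ultimately have "((\<lambda>x. integral {0..x} (\<lambda>s. s * f s)) has_real_derivative r * f r) (at r)"
    by simp
  then show ?thesis
    by (rule has_field_derivative_transform_within_open[of _ _ _ "{0<..}"])
      (use r in \<open>auto simp: integral_weighted_eq_radial_mean momentum_def power2_eq_square\<close>)
qed

lemma momentum_has_real_derivative:
  fixes f :: "real \<Rightarrow> real"
  assumes f: "continuous_on UNIV f" and r: "r \<ge> 0"
  shows "(momentum f has_real_derivative f r - radial_mean f r) (at r)"
proof (cases "r = 0")
  case True
  have "(momentum f has_real_derivative radial_mean f 0) (at 0)"
    unfolding CARAT_DERIV momentum_def
    by (intro exI[of _ "radial_mean f"] conjI allI)
      (use continuous_on_radial_mean[OF f, of UNIV] in \<open>auto simp: continuous_on_eq_continuous_at\<close>)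
  then show ?thesis
    using True by (simp add: radial_mean_0)
next
  case False
  with r have r: "r > 0"
    by simp
  have "((\<lambda>s. s * momentum f s / s) has_real_derivative (r * f r * r - r * momentum f r * 1) / (r * r)) (at r)"
    by (rule DERIV_divide[OF weighted_momentum_has_real_derivative[OF f r] DERIV_ident]) (use r in simp)
  moreover have "(r * f r * r - r * momentum f r * 1) / (r * r) = f r - radial_mean f r"
    using r by (simp add: momentum_def field_simps)
  ultimately have "((\<lambda>s. s * momentum f s / s) has_real_derivative f r - radial_mean f r) (at r)"
    by simp
  then show ?thesis
    by (rule has_field_derivative_transform_within_open[of _ _ _ "{0<..}"]) (use r in auto)
qed

definition profile :: "real \<Rightarrow> (real \<Rightarrow> real) \<Rightarrow> real \<Rightarrow> real" where
  "profile a f r = a + integral {0..r} (\<lambda>s. velocity (momentum f s))"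

lemma continuous_on_velocity_momentum:
  fixes f :: "real \<Rightarrow> real"
  assumes "continuous_on UNIV f"
  shows "continuous_on S (\<lambda>s. velocity (momentum f s))"
  by (rule continuous_on_compose2[OF continuous_on_velocity continuous_on_momentum[OF assms] subset_UNIV])

lemma profile_has_real_derivative:
  fixes f :: "real \<Rightarrow> real"
  assumes "continuous_on UNIV f" and "r \<in> {0..b}"
  shows "(profile a f has_real_derivative velocity (momentum f r)) (at r within {0..b})"
  unfolding profile_def
  using DERIV_add[OF DERIV_const[of a]
      integral_has_real_derivative[OF continuous_on_velocity_momentum[OF assms(1)] assms(2)]]
  by simp

lemma continuous_on_profile:
  fixes f :: "real \<Rightarrow> real"
  assumes "continuous_on UNIV f"
  shows "continuous_on {0..b} (profile a f)"
  unfolding profile_def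
  by (intro continuous_intros indefinite_integral_continuous_1 integrable_continuous_interval
      continuous_on_velocity_momentum assms)

lemma abs_profile_minus_initial_le:
  fixes f :: "real \<Rightarrow> real"
  assumes "continuous_on UNIV f" and "r \<ge> 0"
  shows "\<bar>profile a f r - a\<bar> \<le> r"
proof -
  have "norm (integral {0..r} (\<lambda>s. velocity (momentum f s))) \<le> 1 * (r - 0)"
    using assms abs_velocity_less_one less_imp_le
    by (intro integral_bound continuous_on_velocity_momentum) auto
  then show ?thesis
    by (simp add: profile_def)
qed

lemma abs_profile_diff_le:
  fixes f g :: "real \<Rightarrow> real"
  assumes f: "continuous_on UNIV f" and g: "continuous_on UNIV g" and "r \<ge> 0"
    and B: "\<And>s. s \<in> {0..r} \<Longrightarrow> \<bar>momentum f s - momentum g s\<bar> \<le> B"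
  shows "\<bar>profile a f r - profile a g r\<bar> \<le> B * r"
proof -
  have "profile a f r - profile a g r
      = integral {0..r} (\<lambda>s. velocity (momentum f s) - velocity (momentum g s))"
    unfolding profile_def
    by (simp add: integral_diff integrable_continuous_interval continuous_on_velocity_momentum f g)
  also have "norm \<dots> \<le> B * (r - 0)"
    using assms velocity_lipschitz
    by (intro integral_bound continuous_intros continuous_on_velocity_momentum)
      (auto intro: order_trans)
  finally show ?thesis
    by simp
qed

section \<open>The fixed-point problem\<close>

text \<open>Composing with clamp 0 \<delta> makes the map act on bounded continuous functions on the
  whole real line.\<close>

definition picard_map :: "real \<Rightarrow> real \<Rightarrow> real \<Rightarrow> (real \<Rightarrow> real) \<Rightarrow> real \<Rightarrow> real" where
  "picard_map \<alpha> a \<delta> f r =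
     source \<alpha> (a/2) (momentum f (clamp 0 \<delta> r)) (profile a f (clamp 0 \<delta> r))"

lemma clamp_mem_atLeastAtMost: "(\<delta>::real) \<ge> 0 \<Longrightarrow> clamp 0 \<delta> r \<in> {0..\<delta>}"
  using clamp_in_interval[of 0 \<delta> r] by simp

lemma picard_map_bcontfun:
  fixes f :: "real \<Rightarrow> real"
  assumes f: "continuous_on UNIV f" and "a > 0"
  shows "picard_map \<alpha> a \<delta> f \<in> bcontfun"
proof -
  have "continuous_on UNIV (\<lambda>r. momentum f (clamp 0 \<delta> r))"
    by (intro clamp_continuous_on continuous_on_momentum f)
  moreover have "continuous_on UNIV (\<lambda>r. profile a f (clamp 0 \<delta> r))"
    using continuous_on_profile[OF f, of \<delta> a] by (intro clamp_continuous_on) simp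
  ultimately have "continuous_on UNIV (picard_map \<alpha> a \<delta> f)"
    unfolding picard_map_def using \<open>a > 0\<close> by (intro continuous_on_source) auto
  moreover have "bounded (range (picard_map \<alpha> a \<delta> f))"
    unfolding bounded_iff picard_map_def using abs_source_le[of "a/2"] \<open>a > 0\<close> by auto
  ultimately show ?thesis
    unfolding bcontfun_def by simp
qed

lemma picard_map_dist_le:
  fixes f g :: "real \<Rightarrow> real"
  assumes f: "continuous_on UNIV f" and g: "continuous_on UNIV g" and a: "a > 0"
    and \<delta>: "\<delta> \<ge> 0" and D: "\<And>x. \<bar>f x - g x\<bar> \<le> D"
  shows "\<bar>picard_map \<alpha> a \<delta> f r - picard_map \<alpha> a \<delta> g r\<bar>
    \<le> \<bar>\<alpha>\<bar> * (2/a + 8/a\<^sup>2) * (\<delta> + \<delta>\<^sup>2) * D"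
proof -
  define s where "s = clamp 0 \<delta> r"
  have s: "s \<in> {0..\<delta>}"
    unfolding s_def using \<delta> by (rule clamp_mem_atLeastAtMost)
  have fg: "continuous_on UNIV (\<lambda>x. f x - g x)"
    using f g by (intro continuous_intros)
  have momentum: "\<bar>momentum f t - momentum g t\<bar> \<le> \<delta> * D" if "t \<in> {0..\<delta>}" for t
  proof -
    have "momentum f t - momentum g t = momentum (\<lambda>x. f x - g x) t"
      unfolding momentum_def radial_mean_diff[OF f g, symmetric] by (simp add: algebra_simps)
    also have "\<bar>\<dots>\<bar> \<le> \<bar>t\<bar> * D"
      by (rule abs_momentum_le[OF fg D])
    also have "\<dots> \<le> \<delta> * D"
      using that D[of 0] by (intro mult_right_mono) auto
    finally show ?thesis .
  qed
  have "\<bar>profile a f s - profile a g s\<bar> \<le> (\<delta> * D) * s"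
    using s by (intro abs_profile_diff_le f g momentum) auto
  also have "\<dots> \<le> \<delta>\<^sup>2 * D"
    using s D[of 0] \<delta> unfolding power2_eq_square
    by (metis atLeastAtMost_iff abs_ge_zero mult.assoc mult.commute mult_left_mono order_trans)
  finally have profile: "\<bar>profile a f s - profile a g s\<bar> \<le> \<delta>\<^sup>2 * D" .
  have "\<bar>picard_map \<alpha> a \<delta> f r - picard_map \<alpha> a \<delta> g r\<bar>
      \<le> \<bar>\<alpha>\<bar> * (1/(a/2) + 2/(a/2)\<^sup>2)
         * (\<bar>momentum f s - momentum g s\<bar> + \<bar>profile a f s - profile a g s\<bar>)"
    unfolding picard_map_def s_def[symmetric] using a by (intro source_lipschitz) simp
  also have "\<dots> \<le> \<bar>\<alpha>\<bar> * (1/(a/2) + 2/(a/2)\<^sup>2) * (\<delta> * D + \<delta>\<^sup>2 * D)"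
    using momentum[OF s] profile a by (intro mult_left_mono add_mono) auto
  also have "\<dots> = \<bar>\<alpha>\<bar> * (2/a + 8/a\<^sup>2) * (\<delta> + \<delta>\<^sup>2) * D"
    by (simp add: field_simps power2_eq_square)
  finally show ?thesis .
qed

lemma picard_map_has_fixed_point:
  assumes a: "a > 0" and \<delta>: "\<delta> \<ge> 0"
    and K: "\<bar>\<alpha>\<bar> * (2/a + 8/a\<^sup>2) * (\<delta> + \<delta>\<^sup>2) < 1"
  shows "\<exists>f. continuous_on UNIV f \<and> (\<forall>r. picard_map \<alpha> a \<delta> f r = f r)"
proof -
  define K where "K = \<bar>\<alpha>\<bar> * (2/a + 8/a\<^sup>2) * (\<delta> + \<delta>\<^sup>2)"
  define T where "T f = Bcontfun (picard_map \<alpha> a \<delta> (apply_bcontfun f))" for f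
  have T: "apply_bcontfun (T f) = picard_map \<alpha> a \<delta> (apply_bcontfun f)" for f
    unfolding T_def by (rule Bcontfun_inverse[OF picard_map_bcontfun[OF continuous_on_apply_bcontfun a]])
  have "dist (T f) (T g) \<le> K * dist f g" for f g
  proof (rule dist_bound)
    fix r
    have "\<bar>f x - g x\<bar> \<le> dist f g" for x
      using dist_bounded[of f x g] by (simp add: dist_real_def)
    then show "dist (T f r) (T g r) \<le> K * dist f g"
      unfolding T K_def dist_real_def
      by (intro picard_map_dist_le continuous_on_apply_bcontfun a \<delta>)
  qed
  moreover have "K \<ge> 0"
    using a \<delta> by (simp add: K_def)
  ultimately obtain f where "T f = f"
    using banach_fix_type[of K T] K by (auto simp: K_def)
  then show ?thesis
    using T[of f] by (intro exI[of _ "apply_bcontfun f"]) auto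
qed

lemma C2_on_profile:
  fixes f :: "real \<Rightarrow> real"
  assumes f: "continuous_on UNIV f"
  shows "C2_on \<delta> (profile a f) (\<lambda>r. velocity (momentum f r))
    (\<lambda>r. velocity_deriv (momentum f r) * (f r - radial_mean f r))"
  unfolding C2_on_def
proof (intro conjI ballI)
  fix r
  assume r: "r \<in> {0..\<delta>}"
  show "(profile a f has_real_derivative velocity (momentum f r)) (at r within {0..\<delta>})"
    by (rule profile_has_real_derivative[OF f r])
  have "(momentum f has_real_derivative f r - radial_mean f r) (at r within {0..\<delta>})"
    by (rule has_field_derivative_at_within[OF momentum_has_real_derivative[OF f]]) (use r in simp)
  then show "((\<lambda>r. velocity (momentum f r)) has_real_derivative
      velocity_deriv (momentum f r) * (f r - radial_mean f r)) (at r within {0..\<delta>})"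
    by (rule DERIV_chain2[OF velocity_has_real_derivative])
next
  have "continuous_on {0..\<delta>} (\<lambda>r. velocity_deriv (momentum f r))"
    by (rule continuous_on_compose2[OF continuous_on_velocity_deriv[of UNIV]
          continuous_on_momentum[OF f] subset_UNIV])
  then show "continuous_on {0..\<delta>} (\<lambda>r. velocity_deriv (momentum f r) * (f r - radial_mean f r))"
    by (intro continuous_intros continuous_on_radial_mean continuous_on_subset[OF f]) auto
qed

lemma is_solution_profile:
  fixes f :: "real \<Rightarrow> real"
  assumes f: "continuous_on UNIV f"
    and pos: "\<And>r. r \<in> {0..\<delta>} \<Longrightarrow> profile a f r > 0"
    and eq: "\<And>r. r \<in> {0..\<delta>} \<Longrightarrow> f r = \<alpha> * sqrt (1 + (momentum f r)\<^sup>2) / profile a f r"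
  shows "is_solution \<alpha> a \<delta> (profile a f)"
proof -
  define u1 where "u1 r = velocity (momentum f r)" for r
  have "((\<lambda>s. s * u1 s / sqrt (1 - (u1 s)\<^sup>2)) has_real_derivative
      r * \<alpha> / (profile a f r * sqrt (1 - (u1 r)\<^sup>2))) (at r)" if r: "r \<in> {0<..<\<delta>}" for r
  proof -
    have "((\<lambda>s. s * momentum f s) has_real_derivative r * f r) (at r)"
      using r by (intro weighted_momentum_has_real_derivative f) simp
    moreover have "r * f r = r * \<alpha> / (profile a f r * sqrt (1 - (u1 r)\<^sup>2))"
      using r sqrt_one_plus_sq_pos[of "momentum f r"]
      by (simp add: eq u1_def sqrt_one_minus_velocity_sq)
    ultimately show ?thesis
      by (simp add: u1_def velocity_div_sqrt_one_minus_sq flip: times_divide_eq_right)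
  qed
  moreover have "\<bar>u1 r\<bar> < 1" for r
    by (simp add: u1_def abs_velocity_less_one)
  moreover have "profile a f 0 = a" and "u1 0 = 0"
    by (simp_all add: profile_def u1_def momentum_def velocity_def)
  ultimately show ?thesis
    unfolding is_solution_def using pos C2_on_profile[OF f, of \<delta> a, folded u1_def] by blast
qed

lemma exists_small_radius:
  fixes a L M :: real
  assumes a: "a > 0" and L: "L \<ge> 0" and M: "M \<ge> 0"
  shows "\<exists>\<delta>>0. \<delta> \<le> a/2 \<and> L * (\<delta> + \<delta>\<^sup>2) < 1 \<and> M * \<delta> \<le> 1"
proof -
  define \<delta> where "\<delta> = min (a/2) (1 / (4*L + M + 1))"
  have \<delta>: "\<delta> > 0" "\<delta> \<le> a/2"
    using a L M by (simp_all add: \<delta>_def)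
  have "\<delta> \<le> 1 / (4*L + M + 1)"
    by (simp add: \<delta>_def)
  then have "\<delta> * (4*L + M + 1) \<le> 1"
    using L M by (simp add: le_divide_eq)
  then have "4 * (L * \<delta>) + M * \<delta> + \<delta> \<le> 1"
    by (simp add: algebra_simps)
  moreover have "0 \<le> L * \<delta>" "0 \<le> M * \<delta>"
    using \<delta> L M by simp_all
  ultimately have small: "4 * (L * \<delta>) \<le> 1" "M * \<delta> \<le> 1" "\<delta> \<le> 1"
    using \<delta>(1) by auto
  have "L * (\<delta> + \<delta>\<^sup>2) \<le> L * (2 * \<delta>)"
    using \<delta> small L by (intro mult_left_mono) (auto simp: power2_eq_square mult_le_cancel_left1)
  also have "\<dots> < 1"
    using small by simp
  finally show ?thesis
    using \<delta> small by blast
qed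

lemma exists_local_solution:
  assumes a: "a > 0"
  shows "\<exists>\<delta>>0. \<exists>u. is_solution \<alpha> a \<delta> u"
proof -
  define M where "M = 4 * \<bar>\<alpha>\<bar> / a"
  have M: "M \<ge> 0"
    using a by (simp add: M_def)
  obtain \<delta> where \<delta>: "\<delta> > 0" "\<delta> \<le> a/2"
    and contraction: "\<bar>\<alpha>\<bar> * (2/a + 8/a\<^sup>2) * (\<delta> + \<delta>\<^sup>2) < 1" and M_\<delta>: "M * \<delta> \<le> 1"
    using exists_small_radius[OF a _ M, of "\<bar>\<alpha>\<bar> * (2/a + 8/a\<^sup>2)"] a by auto
  obtain f where f: "continuous_on UNIV f" and fixed: "\<And>r. picard_map \<alpha> a \<delta> f r = f r"
    using picard_map_has_fixed_point[OF a less_imp_le[OF \<delta>(1)] contraction] by blast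
  have "\<bar>f x\<bar> \<le> M" for x
  proof -
    have "\<bar>f x\<bar> = \<bar>source \<alpha> (a/2) (momentum f (clamp 0 \<delta> x)) (profile a f (clamp 0 \<delta> x))\<bar>"
      using fixed[of x] by (simp add: picard_map_def)
    also have "\<dots> \<le> 2 * \<bar>\<alpha>\<bar> / (a/2)"
      using a by (intro abs_source_le) simp
    finally show ?thesis
      by (simp add: M_def)
  qed
  then have momentum: "\<bar>momentum f r\<bar> \<le> 1" if "r \<in> {0..\<delta>}" for r
    using abs_momentum_le[OF f, of M r] mult_right_mono[of r \<delta> M] that M_\<delta> M
    by (auto simp: mult.commute)
  have profile: "profile a f r \<ge> a/2" if "r \<in> {0..\<delta>}" for r
    using abs_profile_minus_initial_le[OF f, of r a] that \<delta> by auto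
  show ?thesis
  proof (intro exI conjI)
    show "is_solution \<alpha> a \<delta> (profile a f)"
    proof (rule is_solution_profile[OF f])
      fix r
      assume r: "r \<in> {0..\<delta>}"
      then show "profile a f r > 0"
        using profile a by force
      have "clamp 0 \<delta> r = r"
        using r clamp_cancel_cbox[of r 0 \<delta>] by simp
      then show "f r = \<alpha> * sqrt (1 + (momentum f r)\<^sup>2) / profile a f r"
        using fixed[of r] momentum[OF r] profile[OF r] by (simp add: picard_map_def source_eq)
    qed
  qed (rule \<delta>(1))
qed

section \<open>Scaling and continuous dependence\<close>

lemma scaled_mem_interval:
  fixes r k \<delta> \<delta>' :: real
  assumes "r \<in> {0..\<delta>'}" and "k > 0" and "\<delta>' * k \<le> \<delta>"
  shows "r * k \<in> {0..\<delta>}"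
proof -
  have "r * k \<le> \<delta>' * k"
    using assms by (intro mult_right_mono) auto
  with assms show ?thesis
    using order_trans[of "r * k" "\<delta>' * k" \<delta>] by auto
qed

lemma C2_on_rescale:
  assumes C2: "C2_on \<delta> u u1 u2" and k: "k > 0" and \<delta>': "\<delta>' * k \<le> \<delta>"
  shows "C2_on \<delta>' (\<lambda>r. u (r * k) / k) (\<lambda>r. u1 (r * k)) (\<lambda>r. u2 (r * k) * k)"
proof -
  have img: "(\<lambda>r. r * k) ` {0..\<delta>'} \<subseteq> {0..\<delta>}"
    using scaled_mem_interval[OF _ k \<delta>'] by blast
  have scale: "((\<lambda>r. r * k) has_real_derivative k) (at r within {0..\<delta>'})" for r
    by (auto intro!: derivative_eq_intros)
  show ?thesis
    unfolding C2_on_def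
  proof (intro conjI ballI)
    fix r
    assume "r \<in> {0..\<delta>'}"
    then have rk: "r * k \<in> {0..\<delta>}"
      using img by blast
    have "(u has_real_derivative u1 (r * k)) (at (r * k) within (\<lambda>r. r * k) ` {0..\<delta>'})"
      using C2 rk img by (auto simp: C2_on_def intro: has_field_derivative_subset)
    from DERIV_cdivide[OF DERIV_image_chain[OF this scale], of k]
    show "((\<lambda>r. u (r * k) / k) has_real_derivative u1 (r * k)) (at r within {0..\<delta>'})"
      using k by (simp add: o_def)
    have "(u1 has_real_derivative u2 (r * k)) (at (r * k) within (\<lambda>r. r * k) ` {0..\<delta>'})"
      using C2 rk img by (auto simp: C2_on_def intro: has_field_derivative_subset)
    from DERIV_image_chain[OF this scale]
    show "((\<lambda>r. u1 (r * k)) has_real_derivative u2 (r * k) * k) (at r within {0..\<delta>'})"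
      by (simp add: o_def)
  next
    have "continuous_on {0..\<delta>'} (\<lambda>r. u2 (r * k))"
      by (rule continuous_on_compose2[OF _ continuous_on_mult_right[OF continuous_on_id] img])
        (use C2 in \<open>simp add: C2_on_def\<close>)
    then show "continuous_on {0..\<delta>'} (\<lambda>r. u2 (r * k) * k)"
      by (intro continuous_intros)
  qed
qed

lemma is_solution_rescale:
  assumes sol: "is_solution \<alpha> a \<delta> u" and k: "k > 0" and \<delta>': "\<delta>' * k \<le> \<delta>"
  shows "is_solution \<alpha> (a / k) \<delta>' (\<lambda>r. u (r * k) / k)"
proof -
  obtain u1 u2 where C2: "C2_on \<delta> u u1 u2" and range: "\<forall>r\<in>{0..\<delta>}. u r > 0 \<and> \<bar>u1 r\<bar> < 1"
    and ode: "\<forall>r\<in>{0<..<\<delta>}. ((\<lambda>s. s * u1 s / sqrt (1 - (u1 s)\<^sup>2)) has_real_derivative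
        r * \<alpha> / (u r * sqrt (1 - (u1 r)\<^sup>2))) (at r)"
    and init: "u 0 = a" "u1 0 = 0"
    using sol unfolding is_solution_def by blast
  have "((\<lambda>s. s * u1 (s * k) / sqrt (1 - (u1 (s * k))\<^sup>2)) has_real_derivative
      r * \<alpha> / (u (r * k) / k * sqrt (1 - (u1 (r * k))\<^sup>2))) (at r)" if r: "r \<in> {0<..<\<delta>'}" for r
  proof -
    have "r * k \<in> {0<..<\<delta>}"
      using r k \<delta>' by (auto intro: less_le_trans[OF mult_strict_right_mono])
    with ode have "((\<lambda>s. s * u1 s / sqrt (1 - (u1 s)\<^sup>2)) has_real_derivative
        r * k * \<alpha> / (u (r * k) * sqrt (1 - (u1 (r * k))\<^sup>2))) (at (r * k))"
      by blast
    from DERIV_cdivide[OF DERIV_chain2[OF this DERIV_cmult_right[OF DERIV_ident, of k]], of k]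
    show ?thesis
      using k by (simp add: field_simps)
  qed
  then show ?thesis
    unfolding is_solution_def using C2_on_rescale[OF C2 k \<delta>'] range scaled_mem_interval[OF _ k \<delta>'] init k
    by (intro exI[of _ "\<lambda>r. u1 (r * k)"] exI[of _ "\<lambda>r. u2 (r * k) * k"]) auto
qed

lemma is_solution_lipschitz:
  assumes sol: "is_solution \<alpha> a \<delta> u" and "x \<in> {0..\<delta>}" and "y \<in> {0..\<delta>}"
  shows "\<bar>u x - u y\<bar> \<le> \<bar>x - y\<bar>"
proof -
  obtain u1 u2 where C2: "C2_on \<delta> u u1 u2" and range: "\<forall>r\<in>{0..\<delta>}. \<bar>u1 r\<bar> < 1"
    using sol unfolding is_solution_def by blast
  have "norm (u x - u y) \<le> 1 * norm (x - y)"
    using C2 range assms(2,3) unfolding C2_on_def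
    by (intro field_differentiable_bound[where f' = u1 and S = "{0..\<delta>}"]) (auto simp: less_imp_le)
  then show ?thesis
    by simp
qed

lemma is_solution_initial: "is_solution \<alpha> a \<delta> u \<Longrightarrow> u 0 = a"
  unfolding is_solution_def by blast

lemma mem_ball_half_radius:
  fixes a v :: real
  assumes "v \<in> ball a (a/2)"
  shows "a/2 < v" and "v < 3*a/2"
  using assms unfolding mem_ball dist_real_def abs_less_iff by simp_all

lemma abs_ratio_diff_le:
  fixes a v w :: real
  assumes a: "a > 0" and v: "v \<in> ball a (a/2)" and w: "w \<in> ball a (a/2)"
  shows "\<bar>a/w - a/v\<bar> \<le> 4 * \<bar>w - v\<bar> / a"
proof -
  note vw = mem_ball_half_radius[OF v] mem_ball_half_radius[OF w]
  have "a/w - a/v = a * (v - w) / (w * v)"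
    using a vw by (simp add: field_simps)
  then have "\<bar>a/w - a/v\<bar> = a * \<bar>w - v\<bar> / (w * v)"
    using a vw by (simp add: abs_div abs_mult abs_minus_commute)
  also have "\<dots> \<le> a * \<bar>w - v\<bar> / (a/2 * (a/2))"
    using a vw by (intro divide_left_mono mult_mono) auto
  finally show ?thesis
    using a by (simp add: field_simps)
qed

lemma rescaled_lipschitz_in_initial_value:
  fixes u :: "real \<Rightarrow> real"
  assumes lip: "\<And>x y. x \<in> {0..\<delta>} \<Longrightarrow> y \<in> {0..\<delta>} \<Longrightarrow> \<bar>u x - u y\<bar> \<le> \<bar>x - y\<bar>"
    and init: "u 0 = a" and a: "a > 0"
    and v: "v \<in> ball a (a/2)" and w: "w \<in> ball a (a/2)" and r: "r \<in> {0..\<delta>/2}"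
  shows "\<bar>u (r * (a/w)) / (a/w) - u (r * (a/v)) / (a/v)\<bar> \<le> (a + 4*\<delta>) / a * \<bar>w - v\<bar>"
proof -
  note vw = mem_ball_half_radius[OF v] mem_ball_half_radius[OF w]
  define k l where "k = a/w" and "l = a/v"
  have kl: "0 < k" "k < 2" "0 < l" "l < 2"
    using a vw by (simp_all add: k_def l_def field_simps)
  have \<delta>: "\<delta> \<ge> 0"
    using r by simp
  have "\<delta>/2 * k \<le> \<delta>" "\<delta>/2 * l \<le> \<delta>"
    using mult_left_mono[of k 2 "\<delta>/2"] mult_left_mono[of l 2 "\<delta>/2"] kl \<delta> by simp_all
  then have mem: "r * k \<in> {0..\<delta>}" "r * l \<in> {0..\<delta>}" "0 \<in> {0..\<delta>}"
    using scaled_mem_interval[OF r] kl \<delta> by simp_all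
  have u_rk: "\<bar>u (r * k)\<bar> \<le> a + \<delta>"
    using lip[OF mem(1,3)] mem(1) init a by auto
  have "r * \<bar>k - l\<bar> \<le> \<delta>/2 * (4 * \<bar>w - v\<bar> / a)"
    using abs_ratio_diff_le[OF a v w] r a unfolding k_def l_def by (intro mult_mono) auto
  moreover have "\<bar>u (r * k) - u (r * l)\<bar> \<le> r * \<bar>k - l\<bar>"
    using lip[OF mem(1,2)] r by (simp add: abs_mult flip: right_diff_distrib)
  ultimately have "\<bar>u (r * k) - u (r * l)\<bar> \<le> \<delta>/2 * (4 * \<bar>w - v\<bar> / a)"
    by linarith
  then have u_diff: "v * \<bar>u (r * k) - u (r * l)\<bar> \<le> 3 * \<delta> * \<bar>w - v\<bar>"
    using vw a mult_mono[of v "3*a/2" "\<bar>u (r * k) - u (r * l)\<bar>" "\<delta>/2 * (4 * \<bar>w - v\<bar> / a)"]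
    by (simp add: field_simps)
  have "u (r * k) / k - u (r * l) / l = ((w - v) * u (r * k) + v * (u (r * k) - u (r * l))) / a"
    using a vw by (simp add: k_def l_def field_simps)
  then have "\<bar>u (r * k) / k - u (r * l) / l\<bar>
      = \<bar>(w - v) * u (r * k) + v * (u (r * k) - u (r * l))\<bar> / a"
    using a by (simp add: abs_div)
  also have "\<dots> \<le> (\<bar>w - v\<bar> * (a + \<delta>) + 3 * \<delta> * \<bar>w - v\<bar>) / a"
    using a vw u_rk u_diff
    by (intro divide_right_mono order_trans[OF abs_triangle_ineq add_mono])
      (auto simp: abs_mult intro: mult_left_mono)
  finally show ?thesis
    by (simp add: k_def l_def field_simps)
qed

lemma uniformly_lipschitz_family_continuous:
  fixes U :: "real \<Rightarrow> 'a \<Rightarrow> real"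
  assumes lip: "\<And>v w r. v \<in> S \<Longrightarrow> w \<in> S \<Longrightarrow> r \<in> R \<Longrightarrow> \<bar>U w r - U v r\<bar> \<le> C * \<bar>w - v\<bar>"
    and C: "C \<ge> 0" and v: "v \<in> S" and e: "e > 0"
  shows "\<exists>d>0. \<forall>w\<in>S. \<bar>w - v\<bar> < d \<longrightarrow> (\<forall>r\<in>R. \<bar>U w r - U v r\<bar> < e)"
proof (intro exI[of _ "e / (C + 1)"] conjI ballI impI)
  show "e / (C + 1) > 0"
    using C e by simp
  fix w r
  assume w: "w \<in> S" and close: "\<bar>w - v\<bar> < e / (C + 1)" and r: "r \<in> R"
  have "\<bar>U w r - U v r\<bar> \<le> C * (e / (C + 1))"
    using lip[OF v w r] mult_left_mono[OF less_imp_le[OF close] C] by linarith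
  also have "\<dots> < e"
    using C e by (simp add: field_simps)
  finally show "\<bar>U w r - U v r\<bar> < e" .
qed

theorem theorem3p2:
  fixes \<alpha> u0 :: real
  assumes "\<alpha> \<noteq> 0" and "u0 > 0"
  shows "\<exists>\<delta>>0. \<exists>\<epsilon>>0. \<exists>U :: real \<Rightarrow> real \<Rightarrow> real.
           (\<forall>v0\<in>ball u0 \<epsilon>. is_solution \<alpha> v0 \<delta> (U v0)) \<and>
           (\<forall>v0\<in>ball u0 \<epsilon>. \<forall>e>0. \<exists>d>0. \<forall>w\<in>ball u0 \<epsilon>. \<bar>w - v0\<bar> < d \<longrightarrow>
               (\<forall>r\<in>{0..\<delta>}. \<bar>U w r - U v0 r\<bar> < e))"
proof -
  obtain \<delta> u where \<delta>: "\<delta> > 0" and sol: "is_solution \<alpha> u0 \<delta> u"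
    using exists_local_solution[OF \<open>u0 > 0\<close>] by blast
  define U where "U v r = u (r * (u0/v)) / (u0/v)" for v r
  define C where "C = (u0 + 4*\<delta>) / u0"
  have solutions: "is_solution \<alpha> v (\<delta>/2) (U v)" if "v \<in> ball u0 (u0/2)" for v
  proof -
    from mem_ball_half_radius(1)[OF that] have "u0/v > 0" "\<delta>/2 * (u0/v) \<le> \<delta>"
      using \<open>u0 > 0\<close> \<delta> by (auto simp: field_simps)
    from is_solution_rescale[OF sol this]
    show ?thesis
      using \<open>u0 > 0\<close> by (simp add: U_def[abs_def])
  qed
  have lipschitz: "\<bar>U w r - U v r\<bar> \<le> C * \<bar>w - v\<bar>"
    if "v \<in> ball u0 (u0/2)" "w \<in> ball u0 (u0/2)" "r \<in> {0..\<delta>/2}" for v w r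
    unfolding U_def C_def
    by (rule rescaled_lipschitz_in_initial_value[OF is_solution_lipschitz[OF sol]
          is_solution_initial[OF sol] \<open>u0 > 0\<close> that])
  have C: "C \<ge> 0"
    using \<open>u0 > 0\<close> \<delta> by (simp add: C_def)
  have continuity: "\<exists>d>0. \<forall>w\<in>ball u0 (u0/2). \<bar>w - v\<bar> < d \<longrightarrow>
      (\<forall>r\<in>{0..\<delta>/2}. \<bar>U w r - U v r\<bar> < e)" if "v \<in> ball u0 (u0/2)" and "e > 0" for v e
    using uniformly_lipschitz_family_continuous[OF lipschitz C that] .
  show ?thesis
    by (rule exI[of _ "\<delta>/2"])
      (use \<delta> \<open>u0 > 0\<close> solutions continuity in \<open>intro conjI exI[of _ "u0/2"] exI[of _ U]; simp\<close>)
qed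

end
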